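(* Assume $n\neq2$. Let $\phi\in V^+$ be a polynomial solution of total degree $m$ with homogeneous components $\phi_0,\dots,\phi_m$, and write $\phi_d=\sum_{1\le\alpha_1\le\dots\le\alpha_d\le n}x^{\alpha_1}\cdots x^{\alpha_d}p_\alpha$ with $p_\alpha\in\mathrm{Cl}(\eta)$. Define $$\widehat{\phi_d}:=\sum_{1\le\alpha_1\le\dots\le\alpha_d\le n}\frac{1}{(-1)^d\prod_{k=1}^d(\frac n2+d-k)}\,\widehat{x^{\alpha_1}}\cdots\widehat{x^{\alpha_d}}\,\widetilde{p_\alpha}\in Z_n,$$ and $\widehat\phi:=\widehat{\phi_0}+\dots+\widehat{\phi_m}$. Then $\widehat\phi\cdot1=\phi$.
   Context: Fix $n\ge1$ and an invertible complex matrix $\eta=(\eta^{ij})$ with $\eta^{ij}=\eta^{ji}$ and inverse $(\eta_{ij})$. $\mathcal{A}=W(2n|n)$ is the associative superalgebra generated by even $x^1,\dots,x^n,\partial_1,\dots,\partial_n$ and odd $\gamma^1,\dots,\gamma^n$ with relations $x^ix^j=x^jx^i$, $\partial_i\partial_j=\partial_j\partial_i$, $\partial_ix^j-x^j\partial_i=\delta_i^j$, $\gamma^i$ commuting with $x^j,\partial_j$, $\gamma^i\gamma^j+\gamma^j\gamma^i=2\eta^{ij}$. Repeated indices are summed; $x_i=\eta_{ij}x^j$, $\partial^i=\eta^{ij}\partial_j$. $\mathcal{A}$ acts on $V=\mathrm{Cl}(\eta)\otimes\mathbb{C}[x^1,\dots,x^n]$ ($x^i,\gamma^i$ by left multiplication,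 $\partial_i$ by $\partial/\partial x^i$). $X=\frac{\sqrt{-1}}{\sqrt2}\gamma^i\partial_i$, $H=-\frac12(\partial_ix^i+x^i\partial_i)$, $E=-\frac12\partial^i\partial_i$, $V^+=\{v\in V:Xv=0\}$ (polynomial solutions of the massless Dirac equation). $I=\mathcal{A}X+\mathcal{A}E$, $Z_n=N_{\mathcal{A}}(I)/I$ with $N_{\mathcal{A}}(I)=\{a:Ia\subset I\}$; $Z_n$ acts on $V^+$. $\widehat{x^i}\in Z_n$ is the class of $(H+1)x^i+\frac12\gamma^jx_j\gamma^i+\frac12x^jx_j\partial^i$ and $\widehat{\gamma^i}\in Z_n$ the class of $(H+1)\gamma^i-\gamma^jx_j\partial^i$ (the paper asserts these lie in $N_{\mathcal{A}}(I)$); $\widetilde{\gamma}^i:=\frac{1}{1-n/2}\widehat{\gamma^i}$. For $p\in\mathrm{Cl}(\eta)$ written as $p=\sum c_\alpha\gamma^{\alpha_1}\cdots\gamma^{\alpha_r}$ (sum over $1\le\alpha_1<\dots<\alpha_r\le n$, $r\ge0$), set $\widetilde p:=\sum c_\alpha\widetilde\gamma^{\alpha_1}\cdots\widetilde\gamma^{\alpha_r}\in Z_n$. *)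

theory Defs
  imports Complex_Main
begin

text \<open>Indices are 0-based: 0,...,n-1 stand for the paper's 1,...,n.
  An element of V = Cl(eta) (x) C[x^0..x^(n-1)] is modelled by its coefficient
  function: v a S is the coefficient of the basis element x^a gamma^S, where
  a is an exponent vector and S a strictly increasing list of indices < n
  (gamma^S = gamma^(s1) ... gamma^(sr) for S = [s1,...,sr]).\<close>

type_synonym vec = "(nat \<Rightarrow> nat) \<Rightarrow> nat list \<Rightarrow> complex"

definition clb :: "nat \<Rightarrow> nat list set" where
  "clb n = {S. sorted_wrt (<) S \<and> set S \<subseteq> {..<n}}"

text \<open>Left multiplication in Cl(eta): gmul e i S is the coefficient function of
  gamma^i * gamma^S in the ordered monomial basis (for S strictly increasing),
  using gamma^i gamma^j + gamma^j gamma^i = 2 eta^(ij).\<close>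
fun gmul :: "(nat \<Rightarrow> nat \<Rightarrow> complex) \<Rightarrow> nat \<Rightarrow> nat list \<Rightarrow> nat list \<Rightarrow> complex" where
  "gmul e i [] = (\<lambda>T. if T = [i] then 1 else 0)"
| "gmul e i (s # w) =
     (if i < s then (\<lambda>T. if T = i # s # w then 1 else 0)
      else if i = s then (\<lambda>T. if T = w then e i i else 0)
      else (\<lambda>T. (case T of [] \<Rightarrow> 0 | t # T' \<Rightarrow> if t = s then - gmul e i w T' else 0)
                + (if T = w then 2 * e i s else 0)))"

definition vadd :: "vec \<Rightarrow> vec \<Rightarrow> vec" where
  "vadd v w = (\<lambda>a S. v a S + w a S)"

definition vscale :: "complex \<Rightarrow> vec \<Rightarrow> vec" where
  "vscale c v = (\<lambda>a S. c * v a S)"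

definition vsumS :: "'i set \<Rightarrow> ('i \<Rightarrow> vec) \<Rightarrow> vec" where
  "vsumS A f = (\<lambda>a S. \<Sum>k\<in>A. f k a S)"

definition vsum :: "nat \<Rightarrow> (nat \<Rightarrow> vec) \<Rightarrow> vec" where
  "vsum n f = vsumS {..<n} f"

definition xop :: "nat \<Rightarrow> vec \<Rightarrow> vec" where
  "xop i v = (\<lambda>a S. if 0 < a i then v (a(i := a i - 1)) S else 0)"

definition dop :: "nat \<Rightarrow> vec \<Rightarrow> vec" where
  "dop i v = (\<lambda>a S. of_nat (a i + 1) * v (a(i := Suc (a i))) S)"

definition gop :: "nat \<Rightarrow> (nat \<Rightarrow> nat \<Rightarrow> complex) \<Rightarrow> nat \<Rightarrow> vec \<Rightarrow> vec" where
  "gop n eU i v = (\<lambda>a T. \<Sum>S\<in>clb n. v a S * gmul eU i S T)"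

definition xlow :: "nat \<Rightarrow> (nat \<Rightarrow> nat \<Rightarrow> complex) \<Rightarrow> nat \<Rightarrow> vec \<Rightarrow> vec" where
  "xlow n eL j v = vsum n (\<lambda>k. vscale (eL j k) (xop k v))"

definition dup :: "nat \<Rightarrow> (nat \<Rightarrow> nat \<Rightarrow> complex) \<Rightarrow> nat \<Rightarrow> vec \<Rightarrow> vec" where
  "dup n eU i v = vsum n (\<lambda>j. vscale (eU i j) (dop j v))"

definition Hop :: "nat \<Rightarrow> vec \<Rightarrow> vec" where
  "Hop n v = vscale (-1/2) (vsum n (\<lambda>i. vadd (dop i (xop i v)) (xop i (dop i v))))"

definition Xop :: "nat \<Rightarrow> (nat \<Rightarrow> nat \<Rightarrow> complex) \<Rightarrow> vec \<Rightarrow> vec" where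
  "Xop n eU v = vscale (\<i> / complex_of_real (sqrt 2)) (vsum n (\<lambda>i. gop n eU i (dop i v)))"

definition vone :: vec where
  "vone = (\<lambda>a S. if a = (\<lambda>_. 0) \<and> S = [] then 1 else 0)"

definition is_vec :: "nat \<Rightarrow> vec \<Rightarrow> bool" where
  "is_vec n v \<longleftrightarrow> finite {(a, S). v a S \<noteq> 0}
     \<and> (\<forall>a S. v a S \<noteq> 0 \<longrightarrow> S \<in> clb n \<and> (\<forall>i\<ge>n. a i = 0))"

definition Vplus :: "nat \<Rightarrow> (nat \<Rightarrow> nat \<Rightarrow> complex) \<Rightarrow> vec set" where
  "Vplus n eU = {v. is_vec n v \<and> Xop n eU v = (\<lambda>a S. 0)}"

text \<open>Representatives of hat x^i, hat gamma^i, tilde gamma^i acting on V.\<close>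
definition xhat :: "nat \<Rightarrow> (nat \<Rightarrow> nat \<Rightarrow> complex) \<Rightarrow> (nat \<Rightarrow> nat \<Rightarrow> complex) \<Rightarrow> nat \<Rightarrow> vec \<Rightarrow> vec" where
  "xhat n eU eL i v =
     vadd (vadd (Hop n (xop i v)) (xop i v))
      (vadd (vscale (1/2) (vsum n (\<lambda>j. gop n eU j (xlow n eL j (gop n eU i v)))))
            (vscale (1/2) (vsum n (\<lambda>j. xop j (xlow n eL j (dup n eU i v))))))"

definition ghat :: "nat \<Rightarrow> (nat \<Rightarrow> nat \<Rightarrow> complex) \<Rightarrow> (nat \<Rightarrow> nat \<Rightarrow> complex) \<Rightarrow> nat \<Rightarrow> vec \<Rightarrow> vec" where
  "ghat n eU eL i v =
     vadd (vadd (Hop n (gop n eU i v)) (gop n eU i v))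
          (vscale (-1) (vsum n (\<lambda>j. gop n eU j (xlow n eL j (dup n eU i v)))))"

definition gtilde :: "nat \<Rightarrow> (nat \<Rightarrow> nat \<Rightarrow> complex) \<Rightarrow> (nat \<Rightarrow> nat \<Rightarrow> complex) \<Rightarrow> nat \<Rightarrow> vec \<Rightarrow> vec" where
  "gtilde n eU eL i v = vscale (1 / (1 - of_nat n / 2)) (ghat n eU eL i v)"

definition ptilde :: "nat \<Rightarrow> (nat \<Rightarrow> nat \<Rightarrow> complex) \<Rightarrow> (nat \<Rightarrow> nat \<Rightarrow> complex)
    \<Rightarrow> (nat list \<Rightarrow> complex) \<Rightarrow> vec \<Rightarrow> vec" where
  "ptilde n eU eL p v = vsumS (clb n) (\<lambda>S. vscale (p S) (foldr (gtilde n eU eL) S v))"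

definition mis :: "nat \<Rightarrow> nat \<Rightarrow> nat list set" where
  "mis n d = {al. length al = d \<and> sorted al \<and> set al \<subseteq> {..<n}}"

definition expo :: "nat list \<Rightarrow> nat \<Rightarrow> nat" where
  "expo al = (\<lambda>i. count_list al i)"

definition pcoef :: "vec \<Rightarrow> nat list \<Rightarrow> nat list \<Rightarrow> complex" where
  "pcoef v al = (\<lambda>S. v (expo al) S)"

definition mdeg :: "nat \<Rightarrow> (nat \<Rightarrow> nat) \<Rightarrow> nat" where
  "mdeg n a = (\<Sum>i<n. a i)"

definition hatcoef :: "nat \<Rightarrow> nat \<Rightarrow> complex" where
  "hatcoef n d = 1 / ((-1) ^ d * (\<Prod>k = 1..d. of_nat n / 2 + of_nat d - of_nat k))"

definition phihat_d :: "nat \<Rightarrow> (nat \<Rightarrow> nat \<Rightarrow> complex) \<Rightarrow> (nat \<Rightarrow> nat \<Rightarrow> complex) \<Rightarrow> vec \<Rightarrow> nat \<Rightarrow> vec \<Rightarrow> vec" where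
  "phihat_d n eU eL phi d w =
     vsumS (mis n d) (\<lambda>al. vscale (hatcoef n d)
        (foldr (xhat n eU eL) al (ptilde n eU eL (pcoef phi al) w)))"

definition phihat :: "nat \<Rightarrow> (nat \<Rightarrow> nat \<Rightarrow> complex) \<Rightarrow> (nat \<Rightarrow> nat \<Rightarrow> complex) \<Rightarrow> nat \<Rightarrow> vec \<Rightarrow> vec \<Rightarrow> vec" where
  "phihat n eU eL m phi w = vsumS {..m} (\<lambda>d. phihat_d n eU eL phi d w)"

end

theory Submission
  imports Defs "HOL-Library.Function_Algebras" "HOL-Library.Multiset"
begin

text \<open>Write A for Clifford multiplication by x (xslash, gamma^j x_j) and D for the Dirac operator
  gamma^i d_i (dirac), so that V^+ is the kernel of D. On a monogenic f that is homogeneous of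
  degree k, the representative of hat x^i acts as -(k + n/2) x^i f modulo the image of A, and the
  result is again monogenic and of degree k + 1; on constants (n \<noteq> 2) tilde gamma^i is left
  multiplication by gamma^i. Hence hat phi applied to 1 equals phi + A W for some W, the
  normalising factors of hat phi_d cancelling the accumulated scalars -(k + n/2). Both sides are
  monogenic, so D (A W) = 0. On degree k we have D A + A D = n + 2k, and induction on the degree
  shows that A D has no eigenvalue c < 0 or c \<ge> n + 2k there; so D A W = 0 forces W = 0.\<close>

lemma Cons_in_clb_iff: "s # w \<in> clb n \<longleftrightarrow> s < n \<and> (\<forall>x\<in>set w. s < x) \<and> w \<in> clb n"
  by (auto simp: clb_def)

lemma Nil_in_clb [simp]: "[] \<in> clb n"
  by (simp add: clb_def)

lemma finite_clb [simp]: "finite (clb n)"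
proof (rule finite_imageD)
  show "finite (set ` clb n)"
    by (rule finite_subset[of _ "Pow {..<n}"]) (auto simp: clb_def)
  show "inj_on set (clb n)"
    by (auto simp: inj_on_def clb_def intro: strict_sorted_equal)
qed

lemma sum_apply: "(\<Sum>k\<in>K. f k) x = (\<Sum>k\<in>K. f k x)"
  by (induction K rule: infinite_finite_induct) auto

section \<open>The Clifford algebra\<close>

definition cl_basis :: "nat list \<Rightarrow> nat list \<Rightarrow> complex" where
  "cl_basis S = (\<lambda>T. if T = S then 1 else 0)"

definition cl_scale :: "complex \<Rightarrow> (nat list \<Rightarrow> complex) \<Rightarrow> nat list \<Rightarrow> complex" where
  "cl_scale a c = (\<lambda>T. a * c T)"

text \<open>If all monomials of c only involve indices above s, then cl_prefix s c is gamma^s c.\<close>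
definition cl_prefix :: "nat \<Rightarrow> (nat list \<Rightarrow> complex) \<Rightarrow> nat list \<Rightarrow> complex" where
  "cl_prefix s c = (\<lambda>T. case T of [] \<Rightarrow> 0 | t # T' \<Rightarrow> if t = s then c T' else 0)"

definition cl_supported :: "nat \<Rightarrow> (nat list \<Rightarrow> complex) \<Rightarrow> bool" where
  "cl_supported n c \<longleftrightarrow> (\<forall>T. T \<notin> clb n \<longrightarrow> c T = 0)"

definition cl_supported_above :: "nat \<Rightarrow> nat \<Rightarrow> (nat list \<Rightarrow> complex) \<Rightarrow> bool" where
  "cl_supported_above n s c \<longleftrightarrow> (\<forall>T. c T \<noteq> 0 \<longrightarrow> s # T \<in> clb n)"

interpretation cl: module cl_scale
  by unfold_locales (simp_all add: cl_scale_def fun_eq_iff algebra_simps)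

lemma cl_prefix_Nil [simp]: "cl_prefix s c [] = 0"
  and cl_prefix_Cons [simp]: "cl_prefix s c (t # T) = (if t = s then c T else 0)"
  by (simp_all add: cl_prefix_def)

lemma cl_prefix_linear: "module_hom cl_scale cl_scale (cl_prefix s)"
  by unfold_locales (auto simp: fun_eq_iff cl_prefix_def cl_scale_def split: list.split)

lemmas cl_prefix_simps [simp] =
  module_hom.add[OF cl_prefix_linear] module_hom.scale[OF cl_prefix_linear]
  module_hom.zero[OF cl_prefix_linear] module_hom.neg[OF cl_prefix_linear]
  module_hom.diff[OF cl_prefix_linear] module_hom.sum[OF cl_prefix_linear]

lemma cl_basis_Cons: "cl_basis (s # S) = cl_prefix s (cl_basis S)"
  by (auto simp: fun_eq_iff cl_basis_def cl_prefix_def split: list.split)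

lemma cl_supported_above_imp_supported: "cl_supported_above n s c \<Longrightarrow> cl_supported n c"
  by (auto simp: cl_supported_def cl_supported_above_def Cons_in_clb_iff)

lemma cl_supported_above_mono:
  "cl_supported_above n s c \<Longrightarrow> k \<le> s \<Longrightarrow> cl_supported_above n k c"
  by (auto simp: cl_supported_above_def Cons_in_clb_iff) (meson le_less_trans)

lemma cl_supported_above_prefix:
  "cl_supported_above n s c \<Longrightarrow> k < s \<Longrightarrow> cl_supported_above n k (cl_prefix s c)"
  by (auto simp: cl_supported_above_def Cons_in_clb_iff cl_prefix_def split: list.splits)
    (meson less_trans)

lemma cl_supported_above_basis: "s # S \<in> clb n \<Longrightarrow> cl_supported_above n s (cl_basis S)"
  by (simp add: cl_supported_above_def cl_basis_def)

lemma cl_expand: "cl_supported n c \<Longrightarrow> (\<Sum>S\<in>clb n. cl_scale (c S) (cl_basis S)) = c"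
  by (auto simp: fun_eq_iff sum_apply cl_scale_def cl_basis_def cl_supported_def
      if_distrib[of "\<lambda>x. _ * x"] cong: if_cong)

lemma cl_prefix_expand:
  "cl_supported n c \<Longrightarrow> cl_prefix s c = (\<Sum>S\<in>clb n. cl_scale (c S) (cl_basis (s # S)))"
  by (subst (1) cl_expand[symmetric]) (simp_all add: cl_basis_Cons)

lemma gmul_Cons:
  "gmul e i (s # w) =
    (if i < s then cl_basis (i # s # w)
     else if i = s then cl_scale (e i i) (cl_basis w)
     else cl_scale (2 * e i s) (cl_basis w) - cl_prefix s (gmul e i w))"
  by (auto simp: fun_eq_iff cl_basis_def cl_scale_def cl_prefix_def split: list.split)

lemma gmul_support:
  assumes "S \<in> clb n" "i < n" "gmul e i S T \<noteq> 0"
  shows "T \<in> clb n \<and> set T \<subseteq> insert i (set S)"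
  using assms
proof (induction S arbitrary: T)
  case Nil
  then show ?case by (auto simp: clb_def split: if_splits)
next
  case (Cons s w)
  then have w: "w \<in> clb n" "s < n" "\<forall>x\<in>set w. s < x" by (auto simp: Cons_in_clb_iff)
  show ?case
  proof (cases T)
    case (Cons t T')
    with Cons.IH[OF w(1) \<open>i < n\<close>, of T'] Cons.prems w show ?thesis
      by (auto simp: Cons_in_clb_iff split: if_splits)
  qed (use Cons.prems w in \<open>auto split: if_splits\<close>)
qed

locale clifford =
  fixes n :: nat and e :: "nat \<Rightarrow> nat \<Rightarrow> complex"
  assumes e_sym: "i < n \<Longrightarrow> j < n \<Longrightarrow> e i j = e j i"
begin

definition cl_mul :: "nat \<Rightarrow> (nat list \<Rightarrow> complex) \<Rightarrow> nat list \<Rightarrow> complex" where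
  "cl_mul i c = (\<Sum>S\<in>clb n. cl_scale (c S) (gmul e i S))"

lemma cl_mul_linear: "module_hom cl_scale cl_scale (cl_mul i)"
  by unfold_locales
    (simp_all add: cl_mul_def fun_eq_iff sum_apply cl_scale_def sum.distrib sum_distrib_left
      algebra_simps)

lemmas cl_mul_simps [simp] =
  module_hom.add[OF cl_mul_linear] module_hom.scale[OF cl_mul_linear]
  module_hom.zero[OF cl_mul_linear] module_hom.neg[OF cl_mul_linear]
  module_hom.diff[OF cl_mul_linear] module_hom.sum[OF cl_mul_linear]

lemma cl_mul_basis: "S \<in> clb n \<Longrightarrow> cl_mul i (cl_basis S) = gmul e i S"
  by (simp add: cl_mul_def cl_basis_def if_distrib[of "\<lambda>x. cl_scale x _"] cong: if_cong)

lemma cl_mul_basis_below: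
  assumes "i # S \<in> clb n"
  shows "cl_mul i (cl_basis S) = cl_basis (i # S)"
proof -
  have "S \<in> clb n" "\<forall>x\<in>set S. i < x" using assms by (simp_all add: Cons_in_clb_iff)
  then have "cl_mul i (cl_basis S) = gmul e i S" by (simp add: cl_mul_basis)
  also have "\<dots> = cl_basis (i # S)"
    using \<open>\<forall>x\<in>set S. i < x\<close> by (cases S) (auto simp: gmul_Cons fun_eq_iff cl_basis_def)
  finally show ?thesis .
qed

lemma cl_mul_nonzero:
  assumes "cl_mul i c T \<noteq> 0"
  obtains S where "S \<in> clb n" "c S \<noteq> 0" "gmul e i S T \<noteq> 0"
proof -
  have "(\<Sum>S\<in>clb n. c S * gmul e i S T) \<noteq> 0"
    using assms by (simp add: cl_mul_def sum_apply cl_scale_def)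
  then obtain S where "S \<in> clb n" "c S * gmul e i S T \<noteq> 0"
    by (rule sum.not_neutral_contains_not_neutral)
  with that show thesis by simp
qed

lemma cl_mul_supported: "i < n \<Longrightarrow> cl_supported n (cl_mul i c)"
  unfolding cl_supported_def by (metis cl_mul_nonzero gmul_support)

lemma cl_mul_supported_above:
  assumes "cl_supported_above n s c" "s < i" "i < n"
  shows "cl_supported_above n s (cl_mul i c)"
  unfolding cl_supported_above_def
proof (intro allI impI)
  fix T assume "cl_mul i c T \<noteq> 0"
  then obtain S where S: "S \<in> clb n" "c S \<noteq> 0" "gmul e i S T \<noteq> 0"
    by (rule cl_mul_nonzero)
  then have "s # S \<in> clb n" using assms(1) by (auto simp: cl_supported_above_def)
  then show "s # T \<in> clb n"
    using gmul_support[OF S(1) \<open>i < n\<close> S(3)] \<open>s < i\<close> by (auto simp: Cons_in_clb_iff)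
qed

lemma cl_mul_prefix_expand:
  assumes "cl_supported_above n s c"
  shows "cl_mul i (cl_prefix s c) = (\<Sum>S\<in>clb n. cl_scale (c S) (gmul e i (s # S)))"
proof -
  have "cl_mul i (cl_prefix s c) = (\<Sum>S\<in>clb n. cl_scale (c S) (cl_mul i (cl_basis (s # S))))"
    using cl_prefix_expand[OF cl_supported_above_imp_supported[OF assms]] by simp
  also have "\<dots> = (\<Sum>S\<in>clb n. cl_scale (c S) (gmul e i (s # S)))"
    using assms by (intro sum.cong refl) (metis cl_mul_basis cl_supported_above_def cl.scale_zero_left)
  finally show ?thesis .
qed

lemma cl_mul_prefix:
  assumes c: "cl_supported_above n s c"
  shows "cl_mul i (cl_prefix s c) =
    (if i < s then cl_prefix i (cl_prefix s c)
     else if i = s then cl_scale (e s s) c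
     else cl_scale (2 * e i s) c - cl_prefix s (cl_mul i c))"
proof -
  let ?E = "\<lambda>f. \<Sum>S\<in>clb n. cl_scale (c S) (f S)"
  have "cl_mul i (cl_prefix s c) = ?E (\<lambda>S. gmul e i (s # S))"
    by (rule cl_mul_prefix_expand[OF c])
  also have "\<dots> = (if i < s then cl_prefix i (cl_prefix s (?E cl_basis))
     else if i = s then cl_scale (e s s) (?E cl_basis)
     else cl_scale (2 * e i s) (?E cl_basis) - cl_prefix s (?E (gmul e i)))"
    by (simp del: gmul.simps add: gmul_Cons cl_basis_Cons cl.scale_sum_right sum_subtractf
        cl.scale_right_diff_distrib mult.commute)
  also have "\<dots> = (if i < s then cl_prefix i (cl_prefix s c)
     else if i = s then cl_scale (e s s) c
     else cl_scale (2 * e i s) c - cl_prefix s (cl_mul i c))"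
    by (simp only: cl_expand[OF cl_supported_above_imp_supported[OF c]] cl_mul_def)
  finally show ?thesis .
qed

lemma cl_mul_below:
  assumes "cl_supported_above n i c"
  shows "cl_mul i c = cl_prefix i c"
proof -
  have "cl_mul i c = (\<Sum>S\<in>clb n. cl_scale (c S) (cl_basis (i # S)))"
    unfolding cl_mul_def using assms
    by (intro sum.cong refl) (metis cl_mul_basis cl_mul_basis_below cl_supported_above_def cl.scale_zero_left)
  also have "\<dots> = cl_prefix i c"
    by (rule cl_prefix_expand[OF cl_supported_above_imp_supported[OF assms], symmetric])
  finally show ?thesis .
qed

lemma cl_anticomm_below:
  assumes "cl_supported_above n i c" "cl_supported_above n j c" "i < n" "j < n"
  shows "cl_mul i (cl_mul j c) + cl_mul j (cl_mul i c) = cl_scale (2 * e i j) c"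
proof -
  consider "i < j" | "i = j" | "j < i" by linarith
  then show ?thesis
    using assms e_sym[OF \<open>i < n\<close> \<open>j < n\<close>]
    by cases (simp_all add: cl_mul_below cl_mul_prefix fun_eq_iff cl_scale_def algebra_simps)
qed

lemma cl_anticomm_prefix_middle:
  assumes d: "cl_supported_above n s d" and ij: "i \<le> s" "s \<le> j" "j < n"
  shows "cl_mul i (cl_mul j (cl_prefix s d)) + cl_mul j (cl_mul i (cl_prefix s d))
    = cl_scale (2 * e i j) (cl_prefix s d)"
proof -
  have "s < n" "i < n" using ij by simp_all
  have di: "cl_supported_above n i d" by (rule cl_supported_above_mono[OF d \<open>i \<le> s\<close>])
  have dj: "cl_supported_above n s (cl_mul j d)" if "s < j"
    by (rule cl_mul_supported_above[OF d that \<open>j < n\<close>])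
  have Xi: "cl_supported_above n i (cl_prefix s d)" if "i < s"
    by (rule cl_supported_above_prefix[OF d that])
  consider "i < s" "s < j" | "i < s" "s = j" | "i = s" "s < j" | "i = s" "s = j"
    using ij by linarith
  then show ?thesis
    using d di dj Xi e_sym[OF \<open>i < n\<close> \<open>j < n\<close>] e_sym[OF \<open>s < n\<close> \<open>j < n\<close>]
    by cases (simp_all add: cl_mul_prefix cl_mul_below, simp_all add: fun_eq_iff cl_scale_def algebra_simps)
qed

lemma cl_anticomm_prefix_above:
  assumes d: "cl_supported_above n s d" and ij: "s < i" "s < j" "i < n" "j < n"
    and anticomm: "cl_mul i (cl_mul j d) + cl_mul j (cl_mul i d) = cl_scale (2 * e i j) d"
  shows "cl_mul i (cl_mul j (cl_prefix s d)) + cl_mul j (cl_mul i (cl_prefix s d))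
    = cl_scale (2 * e i j) (cl_prefix s d)"
proof -
  have "cl_supported_above n s (cl_mul i d)" "cl_supported_above n s (cl_mul j d)"
    using cl_mul_supported_above[OF d] ij by simp_all
  moreover have "cl_prefix s (cl_mul i (cl_mul j d))
      = cl_scale (2 * e i j) (cl_prefix s d) - cl_prefix s (cl_mul j (cl_mul i d))"
    using arg_cong[OF anticomm, of "cl_prefix s"] by (simp add: eq_diff_eq)
  ultimately show ?thesis
    using d ij by (simp add: cl_mul_prefix)
qed

text \<open>For S = s # w, cl_mul_prefix moves gamma^i and gamma^j past gamma^s; only when both indices
  exceed s does the claim reduce to the one for w.\<close>
lemma cl_anticomm_basis:
  assumes "S \<in> clb n" "i < n" "j < n"
  shows "cl_mul i (cl_mul j (cl_basis S)) + cl_mul j (cl_mul i (cl_basis S))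
    = cl_scale (2 * e i j) (cl_basis S)"
  using assms
proof (induction S arbitrary: i j)
  case Nil
  then show ?case by (intro cl_anticomm_below) (simp_all add: cl_supported_above_basis clb_def)
next
  case (Cons s w)
  let ?d = "cl_basis w"
  have d: "cl_supported_above n s ?d" by (rule cl_supported_above_basis[OF Cons.prems(1)])
  have "s < n" "w \<in> clb n" using Cons.prems(1) by (simp_all add: Cons_in_clb_iff)
  have ordered: "cl_mul i (cl_mul j (cl_prefix s ?d)) + cl_mul j (cl_mul i (cl_prefix s ?d))
      = cl_scale (2 * e i j) (cl_prefix s ?d)" if "i \<le> j" "j < n" for i j
  proof -
    consider "j < s" | "i \<le> s" "s \<le> j" | "s < i" using \<open>i \<le> j\<close> by linarith
    then show ?thesis
    proof cases
      case 1
      then show ?thesis using \<open>i \<le> j\<close> \<open>s < n\<close>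
        by (intro cl_anticomm_below cl_supported_above_prefix[OF d]) simp_all
    next
      case 2
      then show ?thesis by (intro cl_anticomm_prefix_middle[OF d] that(2))
    next
      case 3
      then show ?thesis
        using that by (intro cl_anticomm_prefix_above[OF d] Cons.IH[OF \<open>w \<in> clb n\<close>]) simp_all
    qed
  qed
  show ?case
  proof (cases "i \<le> j")
    case False
    then have "cl_mul j (cl_mul i (cl_prefix s ?d)) + cl_mul i (cl_mul j (cl_prefix s ?d))
        = cl_scale (2 * e i j) (cl_prefix s ?d)"
      using ordered[of j i] Cons.prems e_sym[of i j] by simp
    then show ?thesis by (simp add: cl_basis_Cons add.commute)
  qed (use ordered Cons.prems in \<open>simp add: cl_basis_Cons\<close>)
qed

lemma cl_anticomm:
  assumes c: "cl_supported n c" and "i < n" "j < n"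
  shows "cl_mul i (cl_mul j c) + cl_mul j (cl_mul i c) = cl_scale (2 * e i j) c"
proof -
  let ?E = "\<lambda>f. \<Sum>S\<in>clb n. cl_scale (c S) (f S)"
  have "cl_mul i (cl_mul j c) + cl_mul j (cl_mul i c)
      = ?E (\<lambda>S. cl_mul i (cl_mul j (cl_basis S)) + cl_mul j (cl_mul i (cl_basis S)))"
    by (subst (1 2) cl_expand[OF c, symmetric]) (simp add: sum.distrib cl.scale_right_distrib)
  also have "\<dots> = ?E (\<lambda>S. cl_scale (2 * e i j) (cl_basis S))"
    using assms(2,3) by (intro sum.cong refl) (simp add: cl_anticomm_basis)
  also have "\<dots> = cl_scale (2 * e i j) (?E cl_basis)"
    by (simp add: cl.scale_sum_right mult.commute)
  also have "\<dots> = cl_scale (2 * e i j) c"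
    by (simp only: cl_expand[OF c])
  finally show ?thesis .
qed

end

section \<open>Operators on polynomial spinors\<close>

abbreviation linear_op :: "(vec \<Rightarrow> vec) \<Rightarrow> bool" where
  "linear_op \<equiv> module_hom vscale vscale"

interpretation vec: module vscale
  by unfold_locales (simp_all add: vscale_def fun_eq_iff algebra_simps)

lemma vadd_eq_plus: "vadd v w = v + w"
  by (simp add: vadd_def fun_eq_iff)

lemma vsumS_eq_sum: "vsumS K f = (\<Sum>k\<in>K. f k)"
  by (simp add: vsumS_def fun_eq_iff sum_apply)

lemma vsum_eq_sum: "vsum n f = (\<Sum>k<n. f k)"
  by (simp add: vsum_def vsumS_eq_sum)

text \<open>Vplus is defined with the zero spinor written as a lambda, and goals produced by
  induction contain it in that form as well.\<close>
lemma lambda_zero_eq_zero [simp]: "(\<lambda>a S. 0) = (0 :: vec)"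
  by (simp add: fun_eq_iff)

lemma vscale_eq_0_iff: "vscale c v = 0 \<longleftrightarrow> c = 0 \<or> v = 0"
  by (auto simp: vscale_def fun_eq_iff)

lemma add_self_eq_vscale_2_iff: "v + v = vscale 2 w \<longleftrightarrow> v = w"
  by (auto simp: fun_eq_iff vscale_def)

lemma linear_xop: "linear_op (xop i)"
  by unfold_locales (auto simp: xop_def vscale_def fun_eq_iff)

lemma linear_dop: "linear_op (dop i)"
  by unfold_locales (auto simp: dop_def vscale_def fun_eq_iff algebra_simps)

lemma linear_gop: "linear_op (gop n e i)"
  by unfold_locales (auto simp: gop_def vscale_def fun_eq_iff algebra_simps sum.distrib sum_distrib_left)

lemmas xop_simps [simp] =
  module_hom.add[OF linear_xop] module_hom.scale[OF linear_xop] module_hom.zero[OF linear_xop]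
  module_hom.neg[OF linear_xop] module_hom.diff[OF linear_xop] module_hom.sum[OF linear_xop]

lemmas dop_simps [simp] =
  module_hom.add[OF linear_dop] module_hom.scale[OF linear_dop] module_hom.zero[OF linear_dop]
  module_hom.neg[OF linear_dop] module_hom.diff[OF linear_dop] module_hom.sum[OF linear_dop]

lemmas gop_simps [simp] =
  module_hom.add[OF linear_gop] module_hom.scale[OF linear_gop] module_hom.zero[OF linear_gop]
  module_hom.neg[OF linear_gop] module_hom.diff[OF linear_gop] module_hom.sum[OF linear_gop]

lemma xop_commute: "xop i (xop j v) = xop j (xop i v)"
  by (cases "i = j") (auto simp: xop_def fun_eq_iff fun_upd_twist)

lemma dop_commute: "dop i (dop j v) = dop j (dop i v)"
  by (cases "i = j") (auto simp: dop_def fun_eq_iff fun_upd_twist algebra_simps)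

lemma dop_xop: "dop i (xop j v) = xop j (dop i v) + (if i = j then v else 0)"
proof (cases "i = j")
  case True
  have "dop i (xop i v) a S = xop i (dop i v) a S + v a S" for a S
    by (cases "a i") (auto simp: dop_def xop_def algebra_simps fun_upd_idem)
  with True show ?thesis by (simp add: fun_eq_iff)
qed (auto simp: dop_def xop_def fun_eq_iff fun_upd_twist)

lemma xop_gop: "xop j (gop n e i v) = gop n e i (xop j v)"
  by (auto simp: gop_def xop_def fun_eq_iff)

lemma dop_gop: "dop j (gop n e i v) = gop n e i (dop j v)"
  by (auto simp: gop_def dop_def fun_eq_iff sum_distrib_left algebra_simps)

definition cl_valued :: "nat \<Rightarrow> vec \<Rightarrow> bool" where
  "cl_valued n v \<longleftrightarrow> (\<forall>a. cl_supported n (v a))"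

lemma cl_valued_add: "cl_valued n v \<Longrightarrow> cl_valued n w \<Longrightarrow> cl_valued n (v + w)"
  and cl_valued_scale: "cl_valued n v \<Longrightarrow> cl_valued n (vscale c v)"
  and cl_valued_xop: "cl_valued n v \<Longrightarrow> cl_valued n (xop i v)"
  and cl_valued_dop: "cl_valued n v \<Longrightarrow> cl_valued n (dop i v)"
  by (simp_all add: cl_valued_def cl_supported_def vscale_def xop_def dop_def)

lemma cl_valued_sum: "(\<And>j. j \<in> K \<Longrightarrow> cl_valued n (f j)) \<Longrightarrow> cl_valued n (\<Sum>j\<in>K. f j)"
  by (simp add: cl_valued_def cl_supported_def sum_apply)

lemma mdeg_fun_upd: "i < n \<Longrightarrow> mdeg n (a(i := x)) + a i = mdeg n a + x"
  by (simp add: mdeg_def sum.remove[of "{..<n}" i])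

lemma mdeg_Suc_upd: "i < n \<Longrightarrow> mdeg n (a(i := Suc (a i))) = Suc (mdeg n a)"
  using mdeg_fun_upd[of i n a "Suc (a i)"] by simp

lemma mdeg_pred_upd:
  assumes "i < n" "0 < a i"
  shows "mdeg n a = Suc (mdeg n (a(i := a i - 1)))"
  using mdeg_Suc_upd[OF assms(1), of "a(i := a i - 1)"] assms(2) by simp

definition homogeneous :: "nat \<Rightarrow> nat \<Rightarrow> vec \<Rightarrow> bool" where
  "homogeneous n k v \<longleftrightarrow> (\<forall>a S. mdeg n a \<noteq> k \<longrightarrow> v a S = 0)"

lemma homogeneous_xop:
  assumes "i < n" "homogeneous n k v"
  shows "homogeneous n (Suc k) (xop i v)"
  unfolding homogeneous_def
proof (intro allI impI)
  fix a S assume "mdeg n a \<noteq> Suc k"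
  then show "xop i v a S = 0"
    using assms mdeg_pred_upd[OF assms(1), of a] by (auto simp: homogeneous_def xop_def)
qed

lemma homogeneous_dop:
  assumes "i < n" "homogeneous n (Suc k) v"
  shows "homogeneous n k (dop i v)"
  using assms mdeg_Suc_upd[OF assms(1)] by (simp add: homogeneous_def dop_def)

lemma dop_homogeneous_0:
  assumes "i < n" "homogeneous n 0 v"
  shows "dop i v = 0"
  using assms mdeg_Suc_upd[OF assms(1)] by (simp add: homogeneous_def dop_def fun_eq_iff)

lemma homogeneous_gop: "homogeneous n k v \<Longrightarrow> homogeneous n k (gop n e i v)"
  by (simp add: homogeneous_def gop_def)

lemma homogeneous_add: "homogeneous n k v \<Longrightarrow> homogeneous n k w \<Longrightarrow> homogeneous n k (v + w)"
  by (simp add: homogeneous_def)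

lemma homogeneous_scale: "homogeneous n k v \<Longrightarrow> homogeneous n k (vscale c v)"
  by (simp add: homogeneous_def vscale_def)

lemma homogeneous_sum:
  "(\<And>j. j \<in> K \<Longrightarrow> homogeneous n k (f j)) \<Longrightarrow> homogeneous n k (\<Sum>j\<in>K. f j)"
  by (simp add: homogeneous_def sum_apply)

definition hcomp :: "nat \<Rightarrow> nat \<Rightarrow> vec \<Rightarrow> vec" where
  "hcomp n k v = (\<lambda>a S. if mdeg n a = k then v a S else 0)"

lemma homogeneous_hcomp: "homogeneous n k (hcomp n k v)"
  by (simp add: homogeneous_def hcomp_def)

lemma cl_valued_hcomp: "cl_valued n v \<Longrightarrow> cl_valued n (hcomp n k v)"
  by (simp add: cl_valued_def cl_supported_def hcomp_def)

lemma hcomp_eq_0_imp_eq_0: "(\<And>k. hcomp n k v = 0) \<Longrightarrow> v = 0"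
  by (simp add: hcomp_def fun_eq_iff) metis

lemma linear_hcomp: "linear_op (hcomp n k)"
  by unfold_locales (auto simp: hcomp_def vscale_def fun_eq_iff)

lemmas hcomp_simps [simp] =
  module_hom.add[OF linear_hcomp] module_hom.scale[OF linear_hcomp] module_hom.zero[OF linear_hcomp]
  module_hom.neg[OF linear_hcomp] module_hom.diff[OF linear_hcomp] module_hom.sum[OF linear_hcomp]

lemma hcomp_xop:
  assumes "i < n"
  shows "hcomp n (Suc k) (xop i v) = xop i (hcomp n k v)"
proof (intro ext)
  fix a S
  show "hcomp n (Suc k) (xop i v) a S = xop i (hcomp n k v) a S"
    using mdeg_pred_upd[OF assms, of a] by (auto simp: hcomp_def xop_def)
qed

lemma hcomp_dop: "i < n \<Longrightarrow> hcomp n k (dop i v) = dop i (hcomp n (Suc k) v)"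
  using mdeg_Suc_upd[of i n] by (simp add: hcomp_def dop_def fun_eq_iff)

lemma hcomp_gop: "hcomp n k (gop n e i v) = gop n e i (hcomp n k v)"
  by (auto simp: hcomp_def gop_def fun_eq_iff)

lemma sum_hcomp:
  assumes "\<forall>a S. v a S \<noteq> 0 \<longrightarrow> mdeg n a \<le> m"
  shows "(\<Sum>k\<le>m. hcomp n k v) = v"
proof (intro ext)
  fix a S
  show "(\<Sum>k\<le>m. hcomp n k v) a S = v a S"
    using assms by (cases "v a S = 0") (auto simp: hcomp_def sum_apply)
qed

definition euler :: "nat \<Rightarrow> vec \<Rightarrow> vec" where
  "euler n v = (\<Sum>i<n. xop i (dop i v))"

lemma euler_homogeneous:
  assumes "homogeneous n k v"
  shows "euler n v = vscale (of_nat k) v"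
proof (intro ext)
  fix a S
  have "xop i (dop i v) a S = of_nat (a i) * v a S" for i
    by (cases "a i") (auto simp: xop_def dop_def fun_upd_idem)
  then have "euler n v a S = of_nat (mdeg n a) * v a S"
    by (simp add: euler_def sum_apply mdeg_def sum_distrib_right)
  also have "\<dots> = of_nat k * v a S"
    using assms by (cases "mdeg n a = k") (auto simp: homogeneous_def)
  finally show "euler n v a S = vscale (of_nat k) v a S"
    by (simp add: vscale_def)
qed

lemma Hop_homogeneous:
  assumes "homogeneous n k v"
  shows "Hop n v = vscale (- (of_nat k + of_nat n / 2)) v"
proof -
  have "(\<Sum>i<n. dop i (xop i v) + xop i (dop i v)) = vscale 2 (euler n v) + (\<Sum>i<n. v)"
    by (simp add: dop_xop sum.distrib euler_def fun_eq_iff vscale_def sum_apply sum_distrib_left)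
  then show ?thesis
    by (simp add: Hop_def vsum_eq_sum vadd_eq_plus euler_homogeneous[OF assms] fun_eq_iff
        vscale_def sum_apply algebra_simps)
qed

text \<open>The product of the scalars -(k + n/2), k < d, picked up by d applications of hat x^i to a
  constant (see xhat_homogeneous_eq); hatcoef n d is its inverse.\<close>
definition xhat_factor :: "nat \<Rightarrow> nat \<Rightarrow> complex" where
  "xhat_factor n d = (\<Prod>t<d. - (of_nat t + of_nat n / 2))"

lemma hatcoef_mult_xhat_factor:
  assumes "1 \<le> n"
  shows "hatcoef n d * xhat_factor n d = 1"
proof -
  let ?g = "\<lambda>t::nat. of_nat n / 2 + of_nat t :: complex"
  have "?g t \<noteq> 0" for t
  proof
    assume "?g t = 0"
    then have "(of_nat (n + 2 * t) :: complex) = 0" by (simp add: field_simps)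
    with assms show False by (simp only: of_nat_eq_0_iff)
  qed
  then have nonzero: "(\<Prod>t<d. ?g t) \<noteq> 0" by (simp add: prod_zero_iff)
  have "(\<Prod>k = 1..d. of_nat n / 2 + of_nat d - of_nat k :: complex)
      = (\<Prod>k<d. of_nat n / 2 + of_nat d - of_nat (Suc k))"
    by (simp add: prod.atLeast1_atMost_eq)
  also have "\<dots> = (\<Prod>k<d. ?g (d - Suc k))"
    by (intro prod.cong refl) (simp add: of_nat_diff)
  also have "\<dots> = (\<Prod>t<d. ?g t)"
    by (rule prod.nat_diff_reindex)
  finally have "hatcoef n d = 1 / ((-1) ^ d * (\<Prod>t<d. ?g t))"
    by (simp add: hatcoef_def)
  moreover have "xhat_factor n d = (-1) ^ d * (\<Prod>t<d. ?g t)"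
    unfolding xhat_factor_def by (subst prod_uminus) (simp add: add.commute)
  ultimately show ?thesis using nonzero by simp
qed

section \<open>The Dirac operator and Clifford multiplication by x\<close>

locale weyl_clifford = clifford n eU for n eU +
  fixes eL :: "nat \<Rightarrow> nat \<Rightarrow> complex"
  assumes n_pos: "1 \<le> n"
    and eU_eL_inverse: "i < n \<Longrightarrow> j < n \<Longrightarrow> (\<Sum>k<n. eU i k * eL k j) = (if i = j then 1 else 0)"
begin

abbreviation gam :: "nat \<Rightarrow> vec \<Rightarrow> vec" where "gam \<equiv> gop n eU"
abbreviation xlo :: "nat \<Rightarrow> vec \<Rightarrow> vec" where "xlo \<equiv> xlow n eL"
abbreviation dhi :: "nat \<Rightarrow> vec \<Rightarrow> vec" where "dhi \<equiv> dup n eU"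

definition xslash :: "vec \<Rightarrow> vec" where
  "xslash v = (\<Sum>j<n. gam j (xlo j v))"

definition dirac :: "vec \<Rightarrow> vec" where
  "dirac v = (\<Sum>i<n. gam i (dop i v))"

definition xsq :: "vec \<Rightarrow> vec" where
  "xsq v = (\<Sum>j<n. xop j (xlo j v))"

lemma eL_sym:
  assumes ij: "i < n" "j < n"
  shows "eL i j = eL j i"
proof -
  have eL_eU: "(\<Sum>l<n. eL l i * eU l k) = (if k = i then 1 else 0)" if "k < n" for k
  proof -
    have "(\<Sum>l<n. eL l i * eU l k) = (\<Sum>l<n. eU k l * eL l i)"
      by (intro sum.cong refl) (simp add: e_sym that mult.commute)
    then show ?thesis using eU_eL_inverse[OF that ij(1)] by simp
  qed
  have "eL i j = (\<Sum>k<n. (\<Sum>l<n. eL l i * eU l k) * eL k j)"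
    using ij by (simp add: eL_eU if_distrib[of "\<lambda>x. x * _"] cong: if_cong)
  also have "\<dots> = (\<Sum>k<n. \<Sum>l<n. eL l i * (eU l k * eL k j))"
    by (simp add: sum_distrib_right mult.assoc)
  also have "\<dots> = (\<Sum>l<n. eL l i * (\<Sum>k<n. eU l k * eL k j))"
    by (subst sum.swap) (simp add: sum_distrib_left)
  also have "\<dots> = eL j i"
    using ij by (simp add: eU_eL_inverse if_distrib cong: if_cong)
  finally show ?thesis .
qed

lemma trace_eL_eU: "(\<Sum>i<n. \<Sum>j<n. eL j i * eU i j) = of_nat n"
  using eU_eL_inverse by (simp add: mult.commute)

lemma xlo_eq: "xlo j v = (\<Sum>k<n. vscale (eL j k) (xop k v))"
  by (simp add: xlow_def vsum_eq_sum)

lemma dhi_eq: "dhi i v = (\<Sum>j<n. vscale (eU i j) (dop j v))"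
  by (simp add: dup_def vsum_eq_sum)

lemma linear_xlo: "linear_op (xlo j)"
  unfolding xlo_eq[abs_def]
  by unfold_locales
    (simp_all add: vec.scale_right_distrib sum.distrib vec.scale_sum_right mult.commute)

lemma linear_dhi: "linear_op (dhi j)"
  unfolding dhi_eq[abs_def]
  by unfold_locales
    (simp_all add: vec.scale_right_distrib sum.distrib vec.scale_sum_right mult.commute)

lemmas xlo_simps [simp] =
  module_hom.add[OF linear_xlo] module_hom.scale[OF linear_xlo] module_hom.zero[OF linear_xlo]
  module_hom.neg[OF linear_xlo] module_hom.diff[OF linear_xlo] module_hom.sum[OF linear_xlo]

lemmas dhi_simps [simp] =
  module_hom.add[OF linear_dhi] module_hom.scale[OF linear_dhi] module_hom.zero[OF linear_dhi]
  module_hom.neg[OF linear_dhi] module_hom.diff[OF linear_dhi] module_hom.sum[OF linear_dhi]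

lemma linear_xslash: "linear_op xslash"
  unfolding xslash_def[abs_def] by unfold_locales (simp_all add: sum.distrib vec.scale_sum_right)

lemma linear_dirac: "linear_op dirac"
  unfolding dirac_def[abs_def] by unfold_locales (simp_all add: sum.distrib vec.scale_sum_right)

lemma linear_xsq: "linear_op xsq"
  unfolding xsq_def[abs_def] by unfold_locales (simp_all add: sum.distrib vec.scale_sum_right)

lemmas xslash_simps [simp] =
  module_hom.add[OF linear_xslash] module_hom.scale[OF linear_xslash]
  module_hom.zero[OF linear_xslash] module_hom.neg[OF linear_xslash]
  module_hom.diff[OF linear_xslash] module_hom.sum[OF linear_xslash]

lemmas dirac_simps [simp] =
  module_hom.add[OF linear_dirac] module_hom.scale[OF linear_dirac]
  module_hom.zero[OF linear_dirac] module_hom.neg[OF linear_dirac]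
  module_hom.diff[OF linear_dirac] module_hom.sum[OF linear_dirac]

lemmas xsq_simps [simp] =
  module_hom.add[OF linear_xsq] module_hom.scale[OF linear_xsq] module_hom.zero[OF linear_xsq]
  module_hom.neg[OF linear_xsq] module_hom.diff[OF linear_xsq] module_hom.sum[OF linear_xsq]

lemma cl_valued_xlo: "cl_valued n v \<Longrightarrow> cl_valued n (xlo j v)"
  by (simp add: xlo_eq cl_valued_sum cl_valued_scale cl_valued_xop)

lemma cl_valued_dhi: "cl_valued n v \<Longrightarrow> cl_valued n (dhi j v)"
  by (simp add: dhi_eq cl_valued_sum cl_valued_scale cl_valued_dop)

lemma gop_eq_cl_mul: "gam i v = (\<lambda>a. cl_mul i (v a))"
  by (simp add: gop_def cl_mul_def fun_eq_iff sum_apply cl_scale_def)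

lemma cl_valued_gop: "i < n \<Longrightarrow> cl_valued n (gam i v)"
  by (simp add: cl_valued_def gop_eq_cl_mul cl_mul_supported)

lemma gop_anticomm:
  assumes "cl_valued n v" "i < n" "j < n"
  shows "gam i (gam j v) + gam j (gam i v) = vscale (2 * eU i j) v"
  using assms cl_anticomm[of "v _" i j]
  by (simp add: gop_eq_cl_mul cl_valued_def fun_eq_iff vscale_def cl_scale_def)

lemma gop_swap:
  assumes "cl_valued n v" "i < n" "j < n"
  shows "gam j (gam i v) = vscale (2 * eU i j) v - gam i (gam j v)"
  using gop_anticomm[OF assms] by (simp add: eq_diff_eq add.commute)

lemma sum_eU_xlo: "i < n \<Longrightarrow> (\<Sum>j<n. vscale (eU i j) (xlo j u)) = xop i u"
proof -
  assume i: "i < n"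
  have "(\<Sum>j<n. vscale (eU i j) (xlo j u)) = (\<Sum>k<n. vscale (\<Sum>j<n. eU i j * eL j k) (xop k u))"
    by (simp add: xlo_eq vec.scale_sum_right vec.scale_sum_left) (rule sum.swap)
  also have "\<dots> = xop i u"
    using i by (simp add: eU_eL_inverse if_distrib[of "\<lambda>c. vscale c _"] cong: if_cong)
  finally show ?thesis .
qed

lemma sum_eL_xop: "k < n \<Longrightarrow> (\<Sum>j<n. vscale (eL j k) (xop j w)) = xlo k w"
  by (simp add: xlo_eq eL_sym)

lemma xop_xlo: "xop i (xlo j v) = xlo j (xop i v)"
  by (simp add: xlo_eq xop_commute)

lemma xlo_commute: "xlo i (xlo j v) = xlo j (xlo i v)"
proof -
  have "xlo i (xlo j v) = (\<Sum>k<n. \<Sum>l<n. vscale (eL i k * eL j l) (xop k (xop l v)))"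
    by (simp add: xlo_eq vec.scale_sum_right)
  also have "\<dots> = (\<Sum>l<n. \<Sum>k<n. vscale (eL i k * eL j l) (xop k (xop l v)))"
    by (rule sum.swap)
  also have "\<dots> = xlo j (xlo i v)"
    by (simp add: xlo_eq vec.scale_sum_right xop_commute mult.commute)
  finally show ?thesis .
qed

lemma dop_xlo: "i < n \<Longrightarrow> dop i (xlo j v) = xlo j (dop i v) + vscale (eL j i) v"
  by (simp add: xlo_eq dop_xop vec.scale_right_distrib sum.distrib if_distrib[of "vscale _"]
      cong: if_cong)

lemma xlo_gop: "xlo j (gam i v) = gam i (xlo j v)"
  by (simp add: xlo_eq xop_gop)

lemma dirac_xop: "i < n \<Longrightarrow> dirac (xop i v) = xop i (dirac v) + gam i v"
  by (simp add: dirac_def dop_xop xop_gop sum.distrib if_distrib[of "gam _"] cong: if_cong)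

lemma dirac_xlo: "dirac (xlo j v) = xlo j (dirac v) + (\<Sum>k<n. vscale (eL j k) (gam k v))"
  by (simp add: xlo_eq dirac_xop vec.scale_right_distrib sum.distrib)

lemma dirac_dop: "dirac (dop i v) = dop i (dirac v)"
  by (simp add: dirac_def dop_commute dop_gop)

lemma dirac_dhi: "dirac (dhi i v) = dhi i (dirac v)"
  by (simp add: dhi_eq dirac_dop)

lemma dirac_gop:
  assumes "cl_valued n v" "i < n"
  shows "dirac (gam i v) = vscale 2 (dhi i v) - gam i (dirac v)"
proof -
  have "dirac (gam i v) = (\<Sum>j<n. vscale (2 * eU i j) (dop j v) - gam i (gam j (dop j v)))"
    unfolding dirac_def dop_gop
    using gop_swap[OF cl_valued_dop[OF assms(1)] assms(2)] by (intro sum.cong refl) simp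
  also have "\<dots> = vscale 2 (dhi i v) - gam i (dirac v)"
    by (simp add: sum_subtractf dhi_eq dirac_def vec.scale_sum_right)
  finally show ?thesis .
qed

lemma sum_eL_gop_gop:
  assumes "cl_valued n g"
  shows "(\<Sum>i<n. \<Sum>j<n. vscale (eL j i) (gam i (gam j g))) = vscale (of_nat n) g"
proof -
  let ?S = "\<Sum>i<n. \<Sum>j<n. vscale (eL j i) (gam i (gam j g))"
  have swap: "?S = (\<Sum>i<n. \<Sum>j<n. vscale (eL j i) (gam j (gam i g)))"
    by (subst sum.swap) (simp add: eL_sym)
  have "?S + ?S = (\<Sum>i<n. \<Sum>j<n. vscale (eL j i) (gam i (gam j g) + gam j (gam i g)))"
    by (subst (2) swap) (simp add: sum.distrib vec.scale_right_distrib)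
  also have "\<dots> = (\<Sum>i<n. \<Sum>j<n. vscale (2 * (eL j i * eU i j)) g)"
    using assms by (simp add: gop_anticomm mult.commute mult.left_commute)
  also have "\<dots> = vscale 2 (vscale (of_nat n) g)"
    by (simp add: vec.scale_sum_left[symmetric] sum_distrib_left[symmetric] trace_eL_eU)
  finally show ?thesis by (simp only: add_self_eq_vscale_2_iff)
qed

lemma dirac_xslash:
  assumes "cl_valued n g"
  shows "dirac (xslash g) + xslash (dirac g) = vscale (of_nat n) g + vscale 2 (euler n g)"
proof -
  let ?T = "\<lambda>i j. gam i (gam j (xlo j (dop i g)))"
  let ?U = "\<lambda>i j. gam j (gam i (xlo j (dop i g)))"
  have "dirac (xslash g) = (\<Sum>i<n. \<Sum>j<n. ?T i j) + (\<Sum>i<n. \<Sum>j<n. vscale (eL j i) (gam i (gam j g)))"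
    by (simp add: dirac_def xslash_def dop_gop dop_xlo sum.distrib)
  moreover have "xslash (dirac g) = (\<Sum>i<n. \<Sum>j<n. ?U i j)"
    by (subst sum.swap) (simp add: dirac_def xslash_def xlo_gop)
  moreover have "(\<Sum>i<n. \<Sum>j<n. ?T i j) + (\<Sum>i<n. \<Sum>j<n. ?U i j) = vscale 2 (euler n g)"
  proof -
    have "(\<Sum>i<n. \<Sum>j<n. ?T i j) + (\<Sum>i<n. \<Sum>j<n. ?U i j)
        = (\<Sum>i<n. vscale 2 (\<Sum>j<n. vscale (eU i j) (xlo j (dop i g))))"
      using assms
      by (simp add: sum.distrib[symmetric] gop_anticomm cl_valued_xlo cl_valued_dop
          vec.scale_sum_right)
    then show ?thesis by (simp add: sum_eU_xlo euler_def vec.scale_sum_right)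
  qed
  ultimately show ?thesis
    using sum_eL_gop_gop[OF assms] by (simp add: add_ac)
qed

lemma dirac_xsq: "dirac (xsq w) = xsq (dirac w) + vscale 2 (xslash w)"
proof -
  have "dirac (xsq w) = xsq (dirac w) + (\<Sum>j<n. \<Sum>k<n. vscale (eL j k) (gam k (xop j w))) + xslash w"
    by (simp add: xsq_def xslash_def dirac_xop dirac_xlo sum.distrib xop_gop)
  also have "(\<Sum>j<n. \<Sum>k<n. vscale (eL j k) (gam k (xop j w))) = xslash w"
    by (subst sum.swap) (simp add: xslash_def sum_eL_xop[symmetric])
  finally show ?thesis
    by (simp add: fun_eq_iff vscale_def)
qed

lemma xslash_xslash:
  assumes "cl_valued n w"
  shows "xslash (xslash w) = xsq w"
proof -
  let ?T = "\<Sum>j<n. \<Sum>l<n. gam j (gam l (xlo j (xlo l w)))"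
  have swap: "?T = (\<Sum>j<n. \<Sum>l<n. gam l (gam j (xlo j (xlo l w))))"
    by (subst sum.swap) (simp add: xlo_commute)
  have "?T + ?T = (\<Sum>j<n. \<Sum>l<n. vscale (2 * eU j l) (xlo j (xlo l w)))"
    using assms
    by (subst (2) swap) (simp add: sum.distrib[symmetric] gop_anticomm cl_valued_xlo)
  also have "\<dots> = (\<Sum>j<n. vscale 2 (\<Sum>l<n. vscale (eU j l) (xlo l (xlo j w))))"
    by (intro sum.cong refl) (simp add: vec.scale_sum_right xlo_commute)
  also have "\<dots> = vscale 2 (xsq w)"
    by (simp add: sum_eU_xlo xsq_def vec.scale_sum_right)
  finally have "?T = xsq w"
    by (simp only: add_self_eq_vscale_2_iff)
  then show ?thesis
    by (simp add: xslash_def xlo_gop)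
qed

lemma homogeneous_xlo: "homogeneous n k v \<Longrightarrow> homogeneous n (Suc k) (xlo j v)"
  unfolding xlo_eq by (auto intro!: homogeneous_sum homogeneous_scale homogeneous_xop)

lemma homogeneous_dhi: "homogeneous n (Suc k) v \<Longrightarrow> homogeneous n k (dhi j v)"
  unfolding dhi_eq by (auto intro!: homogeneous_sum homogeneous_scale homogeneous_dop)

lemma dhi_homogeneous_0: "homogeneous n 0 v \<Longrightarrow> dhi j v = 0"
  by (simp add: dhi_eq dop_homogeneous_0)

lemma homogeneous_xslash: "homogeneous n k v \<Longrightarrow> homogeneous n (Suc k) (xslash v)"
  unfolding xslash_def by (auto intro!: homogeneous_sum homogeneous_gop homogeneous_xlo)

lemma homogeneous_dirac: "homogeneous n (Suc k) v \<Longrightarrow> homogeneous n k (dirac v)"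
  unfolding dirac_def by (auto intro!: homogeneous_sum homogeneous_gop homogeneous_dop)

lemma dirac_homogeneous_0: "homogeneous n 0 v \<Longrightarrow> dirac v = 0"
  by (simp add: dirac_def dop_homogeneous_0)

lemma cl_valued_xslash: "cl_valued n (xslash v)"
  unfolding xslash_def by (auto intro!: cl_valued_sum cl_valued_gop)

lemma cl_valued_dirac: "cl_valued n (dirac v)"
  unfolding dirac_def by (auto intro!: cl_valued_sum cl_valued_gop)

lemma hcomp_xlo: "hcomp n (Suc k) (xlo j v) = xlo j (hcomp n k v)"
  by (simp add: xlo_eq hcomp_xop)

lemma hcomp_xslash: "hcomp n (Suc k) (xslash v) = xslash (hcomp n k v)"
  by (simp add: xslash_def hcomp_gop hcomp_xlo)

lemma hcomp_dirac: "hcomp n k (dirac v) = dirac (hcomp n (Suc k) v)"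
  by (simp add: dirac_def hcomp_gop hcomp_dop)

lemma xhat_eq:
  "xhat n eU eL i v = Hop n (xop i v) + xop i v
     + (vscale (1/2) (xslash (gam i v)) + vscale (1/2) (xsq (dhi i v)))"
  by (simp add: xhat_def vadd_eq_plus vsum_eq_sum xslash_def xsq_def)

lemma ghat_eq: "ghat n eU eL i v = Hop n (gam i v) + gam i v - xslash (dhi i v)"
  by (simp add: ghat_def vadd_eq_plus vsum_eq_sum xslash_def fun_eq_iff vscale_def)

context
  fixes f :: vec and k i :: nat
  assumes f: "cl_valued n f" "homogeneous n k f" and i: "i < n"
begin

lemma xhat_homogeneous_eq:
  "xhat n eU eL i f = vscale (- (of_nat k + of_nat n / 2)) (xop i f)
     + xslash (vscale (1/2) (gam i f) + vscale (1/2) (xslash (dhi i f)))"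
  unfolding xhat_eq Hop_homogeneous[OF homogeneous_xop[OF i f(2)]]
    xslash_xslash[OF cl_valued_dhi[OF f(1)], symmetric]
  by simp (simp add: fun_eq_iff vscale_def algebra_simps)

lemma homogeneous_xhat: "homogeneous n (Suc k) (xhat n eU eL i f)"
proof -
  have "homogeneous n (Suc k) (xslash (xslash (dhi i f)))"
  proof (cases k)
    case 0
    then show ?thesis using f(2) by (simp add: dhi_homogeneous_0 homogeneous_def)
  next
    case (Suc k')
    then show ?thesis using f(2) by (simp add: homogeneous_xslash homogeneous_dhi)
  qed
  then show ?thesis
    unfolding xhat_homogeneous_eq using f(2) i
    by (simp add: homogeneous_add homogeneous_scale homogeneous_xop homogeneous_xslash
        homogeneous_gop)
qed

lemma cl_valued_xhat: "cl_valued n (xhat n eU eL i f)"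
  unfolding xhat_homogeneous_eq using f(1)
  by (simp add: cl_valued_add cl_valued_scale cl_valued_xop cl_valued_xslash)

lemma dirac_xhat:
  assumes monogenic: "dirac f = 0"
  shows "dirac (xhat n eU eL i f) = 0"
proof -
  have "dirac (xop i f) = gam i f"
    using dirac_xop[OF i, of f] monogenic by simp
  moreover have "dirac (xslash (gam i f))
      = vscale (of_nat n + 2 * of_nat k) (gam i f) - vscale 2 (xslash (dhi i f))"
  proof -
    have "dirac (gam i f) = vscale 2 (dhi i f)"
      using dirac_gop[OF f(1) i] monogenic by simp
    then have "dirac (xslash (gam i f)) + vscale 2 (xslash (dhi i f))
        = vscale (of_nat n) (gam i f) + vscale 2 (vscale (of_nat k) (gam i f))"
      using dirac_xslash[OF cl_valued_gop[OF i], of f]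
        euler_homogeneous[OF homogeneous_gop[OF f(2)]]
      by simp
    then show ?thesis
      by (simp add: fun_eq_iff vscale_def algebra_simps eq_diff_eq)
  qed
  moreover have "dirac (xsq (dhi i f)) = vscale 2 (xslash (dhi i f))"
    using dirac_xsq[of "dhi i f"] monogenic by (simp add: dirac_dhi)
  ultimately show ?thesis
    unfolding xhat_eq Hop_homogeneous[OF homogeneous_xop[OF i f(2)]]
    by simp (simp add: fun_eq_iff vscale_def field_simps)
qed

end

lemma xop_xslash: "xop i (xslash w) = xslash (xop i w)"
  by (simp add: xslash_def xop_gop xop_xlo)

lemma xhat_chain:
  assumes p: "cl_valued n p" "homogeneous n 0 p" and al: "set al \<subseteq> {..<n}"
  shows "cl_valued n (foldr (xhat n eU eL) al p) \<and> homogeneous n (length al) (foldr (xhat n eU eL) al p)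
    \<and> dirac (foldr (xhat n eU eL) al p) = 0"
  using al
proof (induction al)
  case Nil
  then show ?case using p by (simp add: dirac_homogeneous_0)
next
  case (Cons i al)
  then have "i < n" "cl_valued n (foldr (xhat n eU eL) al p)"
    "homogeneous n (length al) (foldr (xhat n eU eL) al p)" "dirac (foldr (xhat n eU eL) al p) = 0"
    by simp_all
  then show ?case by (simp add: cl_valued_xhat homogeneous_xhat dirac_xhat)
qed

lemma xhat_chain_mod_xslash:
  assumes p: "cl_valued n p" "homogeneous n 0 p" and al: "set al \<subseteq> {..<n}"
  shows "\<exists>w. cl_valued n w \<and>
    foldr (xhat n eU eL) al p = vscale (xhat_factor n (length al)) (foldr xop al p) + xslash w"
  using al
proof (induction al)
  case Nil
  have "cl_valued n 0" by (simp add: cl_valued_def cl_supported_def)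
  then show ?case by (intro exI[of _ 0]) (simp add: xhat_factor_def)
next
  case (Cons i al)
  let ?f = "foldr (xhat n eU eL) al p"
  let ?c = "- (of_nat (length al) + of_nat n / 2) :: complex"
  have i: "i < n" and al: "set al \<subseteq> {..<n}" using Cons.prems by auto
  have f: "cl_valued n ?f" "homogeneous n (length al) ?f" using xhat_chain[OF p al] by auto
  obtain w where w: "cl_valued n w"
    "?f = vscale (xhat_factor n (length al)) (foldr xop al p) + xslash w"
    using Cons.IH[OF al] by blast
  define w' where "w' = vscale ?c (xop i w) + vscale (1/2) (gam i ?f) + vscale (1/2) (xslash (dhi i ?f))"
  have "cl_valued n w'"
    unfolding w'_def using w(1) i
    by (intro cl_valued_add cl_valued_scale cl_valued_xop cl_valued_gop cl_valued_xslash)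
  moreover have "xhat n eU eL i ?f
      = vscale ?c (xop i ?f) + xslash (vscale (1/2) (gam i ?f) + vscale (1/2) (xslash (dhi i ?f)))"
    by (rule xhat_homogeneous_eq[OF f i])
  then have "xhat n eU eL i ?f = vscale (xhat_factor n (length (i # al))) (foldr xop (i # al) p) + xslash w'"
    unfolding w'_def
    by (subst (asm) (1) w(2))
      (simp add: xop_xslash xhat_factor_def vec.scale_right_distrib add_ac mult.commute)
  ultimately show ?case by auto
qed

text \<open>By dirac_xslash, D maps an eigenvector of A D of degree j + 1 with eigenvalue c to one of
  degree j with eigenvalue n + 2j - c, which again avoids the interval [0, n + 2j).\<close>
lemma xslash_dirac_eigen_eq_0:
  assumes "cl_valued n g" "homogeneous n j g" "xslash (dirac g) = vscale (of_real c) g"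
    and "c < 0 \<or> real n + 2 * real j \<le> c"
  shows "g = 0"
  using assms
proof (induction j arbitrary: g c)
  case 0
  have "c \<noteq> 0" using "0.prems"(4) n_pos by auto
  moreover have "dirac g = 0" using "0.prems"(2) by (rule dirac_homogeneous_0)
  then have "vscale (of_real c) g = 0" using "0.prems"(3) by simp
  ultimately show ?case by (simp add: vscale_eq_0_iff)
next
  case (Suc j)
  let ?g' = "dirac g"
  have g': "cl_valued n ?g'" "homogeneous n j ?g'"
    using Suc.prems(2) by (simp_all add: cl_valued_dirac homogeneous_dirac)
  have "dirac (xslash ?g') = vscale (of_real c) ?g'"
    using arg_cong[OF Suc.prems(3), of dirac] by simp
  then have "xslash (dirac ?g') = vscale (of_real (real n + 2 * real j - c)) ?g'"
    using dirac_xslash[OF g'(1)] euler_homogeneous[OF g'(2)]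
    by (simp add: fun_eq_iff vscale_def algebra_simps eq_diff_eq)
  then have "?g' = 0"
    by (rule Suc.IH[OF g']) (use Suc.prems(4) in auto)
  then have "vscale (of_real c) g = 0" using Suc.prems(3) by simp
  moreover have "c \<noteq> 0" using Suc.prems(4) by auto
  ultimately show ?case by (simp add: vscale_eq_0_iff)
qed

lemma dirac_xslash_eq_0_imp_eq_0:
  assumes W: "cl_valued n W" and "dirac (xslash W) = 0"
  shows "W = 0"
proof (rule hcomp_eq_0_imp_eq_0)
  fix k
  let ?g = "hcomp n k W"
  have g: "cl_valued n ?g" "homogeneous n k ?g"
    by (simp_all add: cl_valued_hcomp[OF W] homogeneous_hcomp)
  have "dirac (xslash ?g) = 0"
    using assms(2) by (simp add: hcomp_xslash[symmetric] hcomp_dirac[symmetric])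
  then have "xslash (dirac ?g) = vscale (of_real (real n + 2 * real k)) ?g"
    using dirac_xslash[OF g(1)] euler_homogeneous[OF g(2)]
    by (simp add: fun_eq_iff vscale_def algebra_simps)
  then show "?g = 0"
    by (rule xslash_dirac_eigen_eq_0[OF g]) simp
qed

lemma Vplus_iff: "v \<in> Vplus n eU \<longleftrightarrow> is_vec n v \<and> dirac v = 0"
  by (simp add: Vplus_def Xop_def vsum_eq_sum dirac_def vscale_eq_0_iff)

end

section \<open>Constants and monomials\<close>

definition vconst :: "nat \<Rightarrow> (nat list \<Rightarrow> complex) \<Rightarrow> vec" where
  "vconst n q = (\<lambda>a T. if a = (\<lambda>_. 0) \<and> T \<in> clb n then q T else 0)"

lemma vone_eq_vconst: "vone = vconst n (cl_basis [])"
  by (auto simp: vone_def vconst_def cl_basis_def fun_eq_iff)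

lemma homogeneous_vconst: "homogeneous n 0 (vconst n q)"
  by (auto simp: homogeneous_def vconst_def mdeg_def)

lemma cl_valued_vconst: "cl_valued n (vconst n q)"
  by (simp add: cl_valued_def cl_supported_def vconst_def)

lemma sum_vconst_basis: "(\<Sum>S\<in>clb n. vscale (q S) (vconst n (cl_basis S))) = vconst n q"
proof (intro ext)
  fix a T
  show "(\<Sum>S\<in>clb n. vscale (q S) (vconst n (cl_basis S))) a T = vconst n q a T"
    by (cases "a = (\<lambda>_. 0)")
      (auto simp: sum_apply vscale_def vconst_def cl_basis_def if_distrib[of "\<lambda>x. _ * x"] cong: if_cong)
qed

lemma expo_Cons: "expo (i # al) = (expo al)(i := Suc (expo al i))"
  by (simp add: expo_def fun_eq_iff)

lemma foldr_xop_vconst: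
  "foldr xop al (vconst n q) = (\<lambda>a T. if a = expo al \<and> T \<in> clb n then q T else 0)"
proof (induction al)
  case Nil
  then show ?case by (simp add: vconst_def expo_def)
next
  case (Cons i al)
  have "(0 < a i \<and> a(i := a i - 1) = e) \<longleftrightarrow> a = e(i := Suc (e i))" for a e :: "nat \<Rightarrow> nat"
    by (auto simp: fun_eq_iff)
  then show ?case
    using Cons.IH by (auto simp: xop_def expo_Cons fun_eq_iff)
qed

context weyl_clifford
begin

lemma gop_vconst_basis:
  assumes "i # S \<in> clb n"
  shows "gam i (vconst n (cl_basis S)) = vconst n (cl_basis (i # S))"
proof -
  have "vconst n (cl_basis S) = (\<lambda>a. if a = (\<lambda>_. 0) then cl_basis S else 0)"
    using assms by (auto simp: vconst_def cl_basis_def fun_eq_iff Cons_in_clb_iff)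
  moreover have "vconst n (cl_basis (i # S)) = (\<lambda>a. if a = (\<lambda>_. 0) then cl_basis (i # S) else 0)"
    using assms by (auto simp: vconst_def cl_basis_def fun_eq_iff)
  ultimately show ?thesis
    using cl_mul_basis_below[OF assms] by (simp add: gop_eq_cl_mul if_distrib[of "cl_mul i"] cong: if_cong)
qed

lemma gtilde_vconst_basis:
  assumes "n \<noteq> 2" "i # S \<in> clb n"
  shows "gtilde n eU eL i (vconst n (cl_basis S)) = vconst n (cl_basis (i # S))"
proof -
  let ?v = "vconst n (cl_basis S)"
  have "ghat n eU eL i ?v = vscale (1 - of_nat n / 2) (gam i ?v)"
    unfolding ghat_eq Hop_homogeneous[OF homogeneous_gop[OF homogeneous_vconst]]
      dhi_homogeneous_0[OF homogeneous_vconst]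
    by (simp add: fun_eq_iff vscale_def algebra_simps)
  moreover have "(1 - of_nat n / 2 :: complex) \<noteq> 0"
    using assms(1) of_nat_eq_iff[of n 2, where 'a = complex] by (simp add: field_simps)
  ultimately show ?thesis
    by (simp add: gtilde_def gop_vconst_basis[OF assms(2)])
qed

lemma foldr_gtilde_vone:
  assumes "n \<noteq> 2"
  shows "S \<in> clb n \<Longrightarrow> foldr (gtilde n eU eL) S vone = vconst n (cl_basis S)"
proof (induction S)
  case Nil
  then show ?case using vone_eq_vconst[of n] by simp
next
  case (Cons s S)
  then show ?case by (simp add: Cons_in_clb_iff gtilde_vconst_basis[OF assms])
qed

lemma ptilde_vone: "n \<noteq> 2 \<Longrightarrow> ptilde n eU eL q vone = vconst n q"
  by (simp add: ptilde_def vsumS_eq_sum foldr_gtilde_vone sum_vconst_basis)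

end

section \<open>Decomposition into monomials\<close>

lemma mdeg_expo: "set al \<subseteq> {..<n} \<Longrightarrow> mdeg n (expo al) = length al"
proof (induction al)
  case Nil
  then show ?case by (simp add: mdeg_def expo_def)
next
  case (Cons i al)
  then have "i < n" "mdeg n (expo al) = length al" by simp_all
  then show ?case by (simp only: expo_Cons mdeg_Suc_upd length_Cons)
qed

lemma finite_mis: "finite (mis n d)"
  by (rule finite_subset[OF _ finite_lists_length_eq[of "{..<n}" d]]) (auto simp: mis_def)

lemma mis_expo_inject:
  assumes "al \<in> mis n d" "al' \<in> mis n d'" "expo al = expo al'"
  shows "al = al'"
proof -
  have "mset al' = mset al"
    using assms(3) by (simp add: multiset_eq_iff count_mset expo_def fun_eq_iff)
  moreover have "sorted al" "sorted al'" using assms(1,2) by (simp_all add: mis_def)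
  ultimately have "sort al = al'" by (intro properties_for_sort)
  then show ?thesis using sorted_sort_id[OF \<open>sorted al\<close>] by simp
qed

lemma ex_mis_expo:
  assumes "\<forall>i\<ge>n. a i = 0"
  shows "\<exists>al\<in>mis n (mdeg n a). expo al = a"
proof
  let ?M = "\<Sum>i<n. replicate_mset (a i) i"
  let ?al = "sorted_list_of_multiset ?M"
  have count: "count ?M x = a x" for x
  proof -
    have "count ?M x = (\<Sum>i<n. if i = x then a i else 0)"
      by (simp add: count_sum eq_commute)
    then show ?thesis using assms by (cases "x < n") auto
  qed
  show "expo ?al = a"
    by (simp add: expo_def fun_eq_iff count_mset[symmetric] count)
  have "set ?al \<subseteq> {..<n}"
  proof
    fix x assume "x \<in> set ?al"
    then have "0 < a x" using count_mset_gt_0[of x ?al] by (simp add: count)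
    then show "x \<in> {..<n}" using assms by (cases "x < n") auto
  qed
  then show "?al \<in> mis n (mdeg n a)"
    using mdeg_expo[of ?al n] \<open>expo ?al = a\<close> by (simp add: mis_def)
qed

lemma sum_mis_if_expo:
  assumes "\<forall>i\<ge>n. a i = 0"
  shows "(\<Sum>al\<in>mis n d. if a = expo al then x else 0) = (if mdeg n a = d then x else 0)"
proof (cases "mdeg n a = d")
  case True
  then obtain al0 where al0: "al0 \<in> mis n d" "expo al0 = a"
    using ex_mis_expo[OF assms] by blast
  have "a = expo al \<longleftrightarrow> al = al0" if "al \<in> mis n d" for al
  proof
    assume "a = expo al"
    then show "al = al0" using mis_expo_inject[OF that al0(1)] al0(2) by simp
  qed (use al0(2) in simp)
  then have "(\<Sum>al\<in>mis n d. if a = expo al then x else 0) = (\<Sum>al\<in>mis n d. if al = al0 then x else 0)"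
    by (intro sum.cong refl) simp
  then show ?thesis using al0(1) True by (simp add: finite_mis)
next
  case False
  then have "a \<noteq> expo al" if "al \<in> mis n d" for al
    using that mdeg_expo by (auto simp: mis_def)
  then show ?thesis using False by (auto intro: sum.neutral)
qed

lemma sum_mis_monomials:
  assumes "is_vec n v"
  shows "(\<Sum>al\<in>mis n d. (\<lambda>a T. if a = expo al \<and> T \<in> clb n then v a T else 0)) = hcomp n d v"
proof (intro ext)
  fix a T
  show "(\<Sum>al\<in>mis n d. (\<lambda>a T. if a = expo al \<and> T \<in> clb n then v a T else 0)) a T = hcomp n d v a T"
  proof (cases "v a T = 0")
    case False
    then have "\<forall>i\<ge>n. a i = 0" "T \<in> clb n" using assms by (auto simp: is_vec_def)
    then show ?thesis by (simp add: sum_apply hcomp_def sum_mis_if_expo)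
  qed (auto simp: sum_apply hcomp_def intro!: sum.neutral)
qed

lemma foldr_xop_vconst_pcoef:
  "foldr xop al (vconst n (pcoef v al)) = (\<lambda>a T. if a = expo al \<and> T \<in> clb n then v a T else 0)"
  by (intro ext) (auto simp: foldr_xop_vconst pcoef_def)

context weyl_clifford
begin

lemma phihat_vone_eq_sum:
  assumes "n \<noteq> 2"
  shows "phihat n eU eL m phi vone = (\<Sum>d\<le>m. \<Sum>al\<in>mis n d.
    vscale (hatcoef n d) (foldr (xhat n eU eL) al (vconst n (pcoef phi al))))"
  by (simp add: phihat_def phihat_d_def vsumS_eq_sum ptilde_vone[OF assms])

lemma dirac_phihat_vone:
  assumes "n \<noteq> 2"
  shows "dirac (phihat n eU eL m phi vone) = 0"
  using xhat_chain[OF cl_valued_vconst homogeneous_vconst]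
  by (simp add: phihat_vone_eq_sum[OF assms] mis_def)

lemma hatcoef_xhat_chain:
  assumes "set al \<subseteq> {..<n}"
  shows "\<exists>w. cl_valued n w \<and> vscale (hatcoef n (length al)) (foldr (xhat n eU eL) al (vconst n q))
    = foldr xop al (vconst n q) + xslash w"
proof -
  obtain w where "cl_valued n w"
    "foldr (xhat n eU eL) al (vconst n q)
      = vscale (xhat_factor n (length al)) (foldr xop al (vconst n q)) + xslash w"
    using xhat_chain_mod_xslash[OF cl_valued_vconst homogeneous_vconst assms] by blast
  then show ?thesis
    by (intro exI[of _ "vscale (hatcoef n (length al)) w"])
      (simp add: cl_valued_scale vec.scale_right_distrib hatcoef_mult_xhat_factor[OF n_pos])
qed

lemma phihat_vone_mod_xslash:
  assumes "n \<noteq> 2" "is_vec n phi" "\<forall>a S. phi a S \<noteq> 0 \<longrightarrow> mdeg n a \<le> m"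
  obtains W where "cl_valued n W" "phihat n eU eL m phi vone = phi + xslash W"
proof -
  let ?X = "\<lambda>al. foldr xop al (vconst n (pcoef phi al))"
  define w where "w al = (SOME w. cl_valued n w \<and> vscale (hatcoef n (length al))
      (foldr (xhat n eU eL) al (vconst n (pcoef phi al))) = ?X al + xslash w)" for al
  have w: "cl_valued n (w al) \<and> vscale (hatcoef n d) (foldr (xhat n eU eL) al (vconst n (pcoef phi al)))
      = ?X al + xslash (w al)" if "al \<in> mis n d" for d al
  proof -
    have al: "set al \<subseteq> {..<n}" "length al = d" using that by (simp_all add: mis_def)
    then show ?thesis
      unfolding w_def using someI_ex[OF hatcoef_xhat_chain[OF al(1), of "pcoef phi al"]] by simp
  qed
  define W where "W = (\<Sum>d\<le>m. \<Sum>al\<in>mis n d. w al)"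
  have "cl_valued n W"
    unfolding W_def using w by (auto intro!: cl_valued_sum)
  moreover have "phihat n eU eL m phi vone = (\<Sum>d\<le>m. \<Sum>al\<in>mis n d. ?X al + xslash (w al))"
    unfolding phihat_vone_eq_sum[OF assms(1)] using w by (intro sum.cong refl) simp
  then have "phihat n eU eL m phi vone = phi + xslash W"
    unfolding sum.distrib foldr_xop_vconst_pcoef sum_mis_monomials[OF assms(2)] sum_hcomp[OF assms(3)]
    by (simp add: W_def)
  ultimately show thesis by (rule that)
qed

end

theorem proposition7p4:
  fixes n m :: nat and eU eL :: "nat \<Rightarrow> nat \<Rightarrow> complex" and phi :: vec
  assumes "1 \<le> n" and "n \<noteq> 2"
    and "\<forall>i<n. \<forall>j<n. eU i j = eU j i"
    and "\<forall>i<n. \<forall>j<n. (\<Sum>k<n. eU i k * eL k j) = (if i = j then 1 else 0)"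
    and "phi \<in> Vplus n eU"
    and "\<forall>a S. phi a S \<noteq> 0 \<longrightarrow> mdeg n a \<le> m"
    and "\<exists>a S. phi a S \<noteq> 0 \<and> mdeg n a = m"
  shows "phihat n eU eL m phi vone = phi"
proof -
  interpret weyl_clifford n eU eL
    by unfold_locales (use assms(1,3,4) in auto)
  have phi: "is_vec n phi" "dirac phi = 0"
    using assms(5) by (simp_all add: Vplus_iff)
  obtain W where W: "cl_valued n W" "phihat n eU eL m phi vone = phi + xslash W"
    using phihat_vone_mod_xslash[OF assms(2) phi(1) assms(6)] .
  have "dirac (xslash W) = 0"
    using dirac_phihat_vone[OF assms(2), of m phi] phi(2) W(2) by simp
  then have "W = 0"
    by (rule dirac_xslash_eq_0_imp_eq_0[OF W(1)])
  with W(2) show ?thesis by simp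
qed

end
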